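(* Let $l$ be a prime, $\tilde\chi$ a Dirichlet character modulo $l$ with associated character $\chi$, and $f\in S_2^k(\Gamma_0^{(2)}(l),\chi)$. Let $s$ be a symmetric positive definite integral $2\times 2$ matrix with $l'=\det(s)$, $l\nmid l'$. Let $W_l=\begin{pmatrix}lx&y\\ ll'z&lw\end{pmatrix}$ with $x,y,z,w\in\mathbb{Z}$ and $\det W_l=l$ (so $\begin{pmatrix}x&y\\ l'z&lw\end{pmatrix}\in\mathrm{SL}_2(\mathbb{Z})$). Then \[W_l\,\phi_s^*f(\tau)=l^k\,\chi(l'z^2)\,\phi_{ls}^*(f|_{E_2})(\tau).\]
   Context: $\Gamma_0^{(2)}(l)=\{\begin{pmatrix}A&B\\C&D\end{pmatrix}\in \mathrm{Sp}_4(\mathbb{Z}) : C\equiv 0 \pmod l\}$; for $M=\begin{pmatrix}A&B\\C&D\end{pmatrix}$, $F|_kM(Z)=\det(CZ+D)^{-k}F((AZ+B)(CZ+D)^{-1})$ on the genus 2 Siegel upper half space; $\chi(M)=\tilde\chi(\det D)$, and for an integer $n$ prime to $l$, $\chi(n)=\tilde\chi(n)$. $S_2^k(\Gamma_0^{(2)}(l),\chi)$ is the space of Siegel cusp forms of degree 2, weight $k$ with $f|_kM=\chi(M)f$ for all $M\in\Gamma_0^{(2)}(l)$. $E_2=\begin{pmatrix}0&I_2\\-I_2&0\end{pmatrix}$. For a positive definite symmetric $2\times2$ matrix $s$ and a function $F$ on $\mathbb{H}_2$, $\phi_s^*(F)(\tau)=F(s\tau)$. For an elliptic form $g$ of weight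 $2k$ and $\gamma=\begin{pmatrix}a&b\\c&d\end{pmatrix}\in\mathrm{GL}_2^+(\mathbb{Q})$, $(g|\gamma)(\tau)=\det(\gamma)^k(c\tau+d)^{-2k}g(\gamma\tau)$, and $W_l g:=g|W_l$. *)

theory Defs
  imports "HOL-Analysis.Analysis"
begin

definition dirichlet_char :: "nat \<Rightarrow> (int \<Rightarrow> complex) \<Rightarrow> bool" where
  "dirichlet_char l chi \<longleftrightarrow> l > 0 \<and> chi 1 = 1 \<and>
     (\<forall>m n. chi (m * n) = chi m * chi n) \<and>
     (\<forall>n. chi (n + int l) = chi n) \<and>
     (\<forall>n. chi n = 0 \<longleftrightarrow> \<not> coprime n (int l))"

type_synonym cmat2 = "complex^2^2"
type_synonym imat2 = "int^2^2"

definition of_int_mat :: "imat2 \<Rightarrow> cmat2" where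
  "of_int_mat A = (\<chi> i j. of_int (A$i$j))"

definition Im_mat :: "cmat2 \<Rightarrow> real^2^2" where
  "Im_mat Z = (\<chi> i j. Im (Z$i$j))"

definition pos_def_real :: "real^2^2 \<Rightarrow> bool" where
  "pos_def_real Y \<longleftrightarrow> (\<forall>v. v \<noteq> 0 \<longrightarrow> v \<bullet> (Y *v v) > 0)"

definition pos_def_int :: "imat2 \<Rightarrow> bool" where
  "pos_def_int S \<longleftrightarrow> (\<forall>v::int^2. v \<noteq> 0 \<longrightarrow> (\<Sum>i\<in>UNIV. \<Sum>j\<in>UNIV. v$i * S$i$j * v$j) > 0)"

definition Sym2 :: "cmat2 set" where
  "Sym2 = {Z. transpose Z = Z}"

definition siegel_H2 :: "cmat2 set" where
  "siegel_H2 = {Z. transpose Z = Z \<and> pos_def_real (Im_mat Z)}"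

definition cscale :: "complex \<Rightarrow> cmat2 \<Rightarrow> cmat2" where
  "cscale c Z = (\<chi> i j. c * Z$i$j)"

text \<open>Holomorphy on the Siegel upper half space (an open subset of the
  3-dimensional complex space of symmetric matrices): complex Frechet differentiability.\<close>

definition holomorphic_H2 :: "(cmat2 \<Rightarrow> complex) \<Rightarrow> bool" where
  "holomorphic_H2 F \<longleftrightarrow> (\<forall>Z\<in>siegel_H2. \<exists>D. (F has_derivative D) (at Z within Sym2) \<and>
       (\<forall>c V. V \<in> Sym2 \<longrightarrow> D (cscale c V) = c * D V))"

text \<open>An element (A,B,C,D) of Sp_4(Z) in block form; M^T J M = J written in blocks.\<close>

definition Sp4Z :: "(imat2 \<times> imat2 \<times> imat2 \<times> imat2) set" where
  "Sp4Z = {(A,B,C,D). transpose A ** C = transpose C ** A \<and>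
                      transpose B ** D = transpose D ** B \<and>
                      transpose A ** D - transpose C ** B = mat 1}"

definition Gamma0_2 :: "nat \<Rightarrow> (imat2 \<times> imat2 \<times> imat2 \<times> imat2) set" where
  "Gamma0_2 l = {(A,B,C,D) \<in> Sp4Z. \<forall>i j. int l dvd C$i$j}"

definition slash :: "nat \<Rightarrow> (imat2 \<times> imat2 \<times> imat2 \<times> imat2) \<Rightarrow> (cmat2 \<Rightarrow> complex) \<Rightarrow> cmat2 \<Rightarrow> complex" where
  "slash k M F Z = (case M of (A,B,C,D) \<Rightarrow>
     inverse (det (of_int_mat C ** Z + of_int_mat D) ^ k) *
     F ((of_int_mat A ** Z + of_int_mat B) ** matrix_inv (of_int_mat C ** Z + of_int_mat D)))"

definition E2 :: "imat2 \<times> imat2 \<times> imat2 \<times> imat2" where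
  "E2 = (0, mat 1, - mat 1, 0)"

definition diag2 :: "complex \<Rightarrow> complex \<Rightarrow> cmat2" where
  "diag2 a b = (\<chi> i j. if i = j then (if i = 1 then a else b) else 0)"

text \<open>Siegel cusp forms of degree 2, weight k, level Gamma_0^(2)(l), character chi(M) = chi~(det D).
  Cusp condition: Siegel Phi operator of f|_k M vanishes for every M in Sp_4(Z).\<close>

definition siegel_cusp_form :: "nat \<Rightarrow> nat \<Rightarrow> (int \<Rightarrow> complex) \<Rightarrow> (cmat2 \<Rightarrow> complex) \<Rightarrow> bool" where
  "siegel_cusp_form l k chi F \<longleftrightarrow>
     holomorphic_H2 F \<and>
     (\<forall>M\<in>Gamma0_2 l. \<forall>Z\<in>siegel_H2. slash k M F Z = chi (det (snd (snd (snd M)))) * F Z) \<and>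
     (\<forall>M\<in>Sp4Z. \<forall>\<tau>. Im \<tau> > 0 \<longrightarrow>
        ((\<lambda>t::real. slash k M F (diag2 \<tau> (\<i> * of_real t))) \<longlongrightarrow> 0) at_top)"

definition phi_star :: "imat2 \<Rightarrow> (cmat2 \<Rightarrow> complex) \<Rightarrow> complex \<Rightarrow> complex" where
  "phi_star s F \<tau> = F (\<chi> i j. of_int (s$i$j) * \<tau>)"

definition ell_slash :: "nat \<Rightarrow> real \<times> real \<times> real \<times> real \<Rightarrow> (complex \<Rightarrow> complex) \<Rightarrow> complex \<Rightarrow> complex" where
  "ell_slash k \<gamma> g \<tau> = (case \<gamma> of (a,b,c,d) \<Rightarrow>
     complex_of_real (a*d - b*c) ^ k * inverse ((of_real c * \<tau> + of_real d) ^ (2*k)) *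
     g ((of_real a * \<tau> + of_real b) / (of_real c * \<tau> + of_real d)))"

end

theory Submission
  imports Defs
begin

(* Put s' = det s and \<sigma> = -1/(l\<tau>).  Since E_2 acts by Z \<mapsto> -Z^-1, the right-hand side is
   l^k \<chi>(s' z^2) (l^2 \<tau>^2 s')^-k f(\<sigma> s^-1).  The matrix M = (y s, -x; l w, -z adj s) lies in
   \<Gamma>_0^(2)(l) because s is symmetric and l x w - y s' z = 1.  As adj s = s' s^-1, M maps \<sigma> s^-1
   to \<tau>' s with \<tau>' = (y\<sigma> - x)/(l w \<sigma> - s' z), which is W_l \<tau>; its automorphy factor is
   (l w \<sigma> - s' z)^2 / s' and its character value \<chi>(det (-z adj s)) = \<chi>(s' z^2).  The
   transformation law under M expresses f(\<tau>' s) through f(\<sigma> s^-1), and substituting \<sigma>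
   turns this into the claimed identity. *)

definition mat2 :: "'a \<Rightarrow> 'a \<Rightarrow> 'a \<Rightarrow> 'a \<Rightarrow> 'a^2^2" where
  "mat2 a b c d = (\<chi> i j. if i = 1 then (if j = 1 then a else b) else (if j = 1 then c else d))"

lemma mat2_nth [simp]:
  "mat2 a b c d $ 1 $ 1 = a" "mat2 a b c d $ 1 $ 2 = b"
  "mat2 a b c d $ 2 $ 1 = c" "mat2 a b c d $ 2 $ 2 = d"
  by (simp_all add: mat2_def)

lemma mat2_eq_iff [simp]:
  "mat2 a b c d = mat2 a' b' c' d' \<longleftrightarrow> a = a' \<and> b = b' \<and> c = c' \<and> d = d'"
  by (auto simp: vec_eq_iff forall_2)

lemma mat2_expand: "A = mat2 (A$1$1) (A$1$2) (A$2$1) (A$2$2)"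
  by (simp add: vec_eq_iff forall_2)

lemma mat_eq_mat2: "mat c = mat2 c 0 0 (c::'a::zero)"
  by (simp add: vec_eq_iff forall_2 mat_def)

lemma mat2_mult:
  "mat2 a b c d ** mat2 a' b' c' d' =
     mat2 (a*a' + b*c') (a*b' + b*d') (c*a' + d*c') (c*b' + d*(d'::'a::semiring_1))"
  by (simp add: vec_eq_iff forall_2 matrix_matrix_mult_def sum_2)

lemma mat2_add: "mat2 a b c d + mat2 a' b' c' d' = mat2 (a+a') (b+b') (c+c') (d+d')"
  by (simp add: vec_eq_iff forall_2)

lemma mat2_diff:
  "mat2 a b c d - mat2 a' b' c' d' = mat2 (a-a') (b-b') (c-c') (d-(d'::'a::ab_group_add))"
  by (simp add: vec_eq_iff forall_2)

lemma mat2_uminus: "- mat2 a b c d = mat2 (-a) (-b) (-c) (-(d::'a::ab_group_add))"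
  by (simp add: vec_eq_iff forall_2)

lemma transpose_mat2: "transpose (mat2 a b c d) = mat2 a c b d"
  by (simp add: vec_eq_iff forall_2 transpose_def)

lemma symmetric_mat2_expand: "transpose A = A \<Longrightarrow> A = mat2 (A$1$1) (A$1$2) (A$1$2) (A$2$2)"
  by (metis mat2_expand mat2_eq_iff transpose_mat2)

lemma det_mat2: "det (mat2 a b c d) = a*d - b*(c::'a::comm_ring_1)"
  by (simp add: det_2)

lemma of_int_mat_mat2:
  "of_int_mat (mat2 a b c d) = mat2 (of_int a) (of_int b) (of_int c) (of_int d)"
  by (simp add: vec_eq_iff forall_2 of_int_mat_def)

lemma det_of_int_mat: "det (of_int_mat A) = of_int (det A)"
  by (subst (1 2) mat2_expand) (simp add: of_int_mat_mat2 det_mat2)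

lemma cscale_mat2: "cscale t (mat2 a b c d) = mat2 (t*a) (t*b) (t*c) (t*d)"
  by (simp add: vec_eq_iff forall_2 cscale_def)

lemma matrix_inv_unique:
  fixes A B :: "'a::comm_ring_1^'n^'n"
  assumes "A ** B = mat 1" and "B ** A = mat 1"
  shows "matrix_inv A = B"
proof -
  have "\<exists>B'. A ** B' = mat 1 \<and> B' ** A = mat 1"
    using assms by blast
  then have "A ** matrix_inv A = mat 1" and "matrix_inv A ** A = mat 1"
    unfolding matrix_inv_def by (metis (mono_tags, lifting) someI_ex)+
  then have "B = (matrix_inv A ** A) ** B"
    by simp
  also have "\<dots> = matrix_inv A"
    by (metis matrix_mul_assoc matrix_mul_rid assms(1))
  finally show ?thesis ..
qed

lemma matrix_inv_mat2:
  fixes a b c d :: "'a::field"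
  assumes "a*d - b*c \<noteq> 0"
  shows "matrix_inv (mat2 a b c d) =
    mat2 (d/(a*d - b*c)) (-b/(a*d - b*c)) (-c/(a*d - b*c)) (a/(a*d - b*c))"
proof -
  have "(a*d - b*c) * inverse (a*d - b*c) = 1"
    using assms by simp
  then show ?thesis
    by (intro matrix_inv_unique) (simp_all add: mat2_mult mat_eq_mat2 divide_inverse; algebra)+
qed

lemma pos_def_int_mat2D:
  assumes "pos_def_int (mat2 a b b d)"
  shows "0 < a" and "0 < a*d - b^2"
proof -
  have form: "0 < a*(v$1)^2 + 2*b*(v$1)*(v$2) + d*(v$2)^2" if "v \<noteq> 0" for v :: "int^2"
    using assms that unfolding pos_def_int_def
    by (fastforce simp: sum_2 power2_eq_square algebra_simps)
  show "0 < a"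
    using form[of "\<chi> i. if i = 1 then 1 else 0"] by (simp add: vec_eq_iff)
  then show "0 < a*d - b^2"
    using form[of "\<chi> i. if i = 1 then -b else a"]
    by (simp add: vec_eq_iff forall_2 power2_eq_square algebra_simps zero_less_mult_iff)
qed

lemma pos_def_int_det_pos: "transpose s = s \<Longrightarrow> pos_def_int s \<Longrightarrow> 0 < det s"
  by (metis det_mat2 pos_def_int_mat2D(2) power2_eq_square symmetric_mat2_expand)

lemma pos_def_real_mat2:
  fixes a b d :: real
  assumes "0 < a" and "0 < a*d - b^2"
  shows "pos_def_real (mat2 a b b d)"
  unfolding pos_def_real_def
proof (intro allI impI)
  fix v :: "real^2"
  assume "v \<noteq> 0"
  then have "v$1 \<noteq> 0 \<or> v$2 \<noteq> 0"
    by (auto simp: vec_eq_iff forall_2)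
  then have "0 < (a * v$1 + b * v$2)^2 + (a*d - b^2) * (v$2)^2"
    using assms by (cases "v$2 = 0") (simp_all add: add_nonneg_pos)
  also have "\<dots> = a * (v \<bullet> (mat2 a b b d *v v))"
    by (simp add: inner_vec_def matrix_vector_mult_def sum_2 power2_eq_square algebra_simps)
  finally show "0 < v \<bullet> (mat2 a b b d *v v)"
    using \<open>0 < a\<close> by (simp add: zero_less_mult_iff)
qed

lemma pos_def_real_scaleR: "0 < t \<Longrightarrow> pos_def_real P \<Longrightarrow> pos_def_real (t *\<^sub>R P)"
  by (simp add: pos_def_real_def flip: scaleR_matrix_vector_assoc)

lemma cscale_real_in_siegel_H2:
  fixes P :: "real^2^2"
  assumes "transpose P = P" and "pos_def_real P" and "0 < Im \<sigma>"
  shows "cscale \<sigma> (\<chi> i j. of_real (P$i$j)) \<in> siegel_H2"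
proof -
  have "Im_mat (cscale \<sigma> (\<chi> i j. of_real (P$i$j))) = Im \<sigma> *\<^sub>R P"
    by (simp add: vec_eq_iff Im_mat_def cscale_def)
  moreover have "transpose (cscale \<sigma> (\<chi> i j. of_real (P$i$j))) = cscale \<sigma> (\<chi> i j. of_real (P$i$j))"
    using assms(1) by (simp add: vec_eq_iff transpose_def cscale_def)
  ultimately show ?thesis
    using assms by (simp add: siegel_H2_def pos_def_real_scaleR)
qed

lemma cscale_inverse_in_siegel_H2:
  assumes "transpose s = s" and "pos_def_int s" and "0 < Im \<sigma>"
  shows "cscale \<sigma> (matrix_inv (of_int_mat s)) \<in> siegel_H2"
proof -
  define a b d where "a = s$1$1" and "b = s$1$2" and "d = s$2$2"
  have s: "s = mat2 a b b d"
    unfolding a_def b_def d_def using assms(1) by (rule symmetric_mat2_expand)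
  define \<delta> where "\<delta> = a*d - b^2"
  have "0 < a" and "0 < \<delta>"
    using pos_def_int_mat2D assms(2) unfolding s \<delta>_def by blast+
  then have "0 < d"
    unfolding \<delta>_def by (smt (verit) zero_le_power2 zero_less_mult_iff)
  define P where "P = mat2 (d/\<delta>) (-b/\<delta>) (-b/\<delta>) (a/\<delta>)"
  have "complex_of_int a * of_int d - of_int b * of_int b = of_int \<delta>"
    by (simp add: \<delta>_def power2_eq_square)
  then have "matrix_inv (of_int_mat s) = (\<chi> i j. of_real (P$i$j))"
    using \<open>0 < \<delta>\<close> by (simp add: s of_int_mat_mat2 matrix_inv_mat2 P_def vec_eq_iff forall_2)
  moreover have "pos_def_real P"
  proof -
    have "pos_def_real (mat2 (real_of_int d) (-b) (-b) a)"
      using \<open>0 < d\<close> \<open>0 < \<delta>\<close> unfolding \<delta>_def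
      by (intro pos_def_real_mat2) (simp_all add: mult.commute flip: of_int_power of_int_mult)
    moreover have "P = (1/\<delta>) *\<^sub>R mat2 d (-b) (-b) a"
      by (simp add: P_def vec_eq_iff forall_2)
    ultimately show ?thesis
      using \<open>0 < \<delta>\<close> by (simp add: pos_def_real_scaleR)
  qed
  moreover have "transpose P = P"
    by (simp add: P_def transpose_mat2)
  ultimately show ?thesis
    using cscale_real_in_siegel_H2 assms(3) by simp
qed

definition adj2 :: "'a::ab_group_add^2^2 \<Rightarrow> 'a^2^2" where
  "adj2 A = mat2 (A$2$2) (- A$1$2) (- A$2$1) (A$1$1)"

definition Gamma0_lift :: "nat \<Rightarrow> imat2 \<Rightarrow> int \<Rightarrow> int \<Rightarrow> int \<Rightarrow> int \<Rightarrow> imat2 \<times> imat2 \<times> imat2 \<times> imat2"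
  where "Gamma0_lift l s x y z w = (mat y ** s, mat (-x), mat (int l * w), mat (-z) ** adj2 s)"

definition modular_Gamma0_2 :: "nat \<Rightarrow> nat \<Rightarrow> (int \<Rightarrow> complex) \<Rightarrow> (cmat2 \<Rightarrow> complex) \<Rightarrow> bool" where
  "modular_Gamma0_2 l k chi F \<longleftrightarrow>
     (\<forall>M\<in>Gamma0_2 l. \<forall>Z\<in>siegel_H2. slash k M F Z = chi (det (snd (snd (snd M)))) * F Z)"

lemma siegel_cusp_form_modular: "siegel_cusp_form l k chi F \<Longrightarrow> modular_Gamma0_2 l k chi F"
  by (simp add: siegel_cusp_form_def modular_Gamma0_2_def)

lemma Gamma0_lift_in_Gamma0_2:
  assumes "transpose s = s" and "int l * x * w - y * det s * z = 1"
  shows "Gamma0_lift l s x y z w \<in> Gamma0_2 l"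
proof -
  obtain a b d where s: "s = mat2 a b b d"
    using symmetric_mat2_expand[OF assms(1)] by blast
  show ?thesis
    using assms(2)
    by (simp add: s Gamma0_lift_def Gamma0_2_def Sp4Z_def adj2_def mat_eq_mat2 mat2_mult mat2_add
        mat2_diff transpose_mat2 det_mat2 forall_2 algebra_simps)
qed

lemma det_Gamma0_lift_D: "det (snd (snd (snd (Gamma0_lift l s x y z w)))) = det s * z^2"
  by (subst (1 2) mat2_expand)
     (simp add: Gamma0_lift_def adj2_def mat_eq_mat2 mat2_mult det_mat2 power2_eq_square algebra_simps)

lemma slash_Gamma0_lift:
  fixes l :: nat and s :: imat2 and x y z w :: int and \<sigma> :: complex
  defines "\<nu> \<equiv> of_int (int l * w) * \<sigma> - of_int (det s * z)"
  assumes "det s \<noteq> 0" and "\<nu> \<noteq> 0"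
  shows "slash k (Gamma0_lift l s x y z w) F (cscale \<sigma> (matrix_inv (of_int_mat s))) =
    inverse ((\<nu>^2 / of_int (det s))^k) * F (cscale ((of_int y * \<sigma> - of_int x) / \<nu>) (of_int_mat s))"
proof -
  obtain a b c d where s: "s = mat2 a b c d"
    using mat2_expand by blast
  define \<delta> :: complex where "\<delta> = of_int (det s)"
  have \<delta>: "of_int a * of_int d - of_int b * of_int c = \<delta>" "\<delta> \<noteq> 0"
    using assms(2) unfolding \<delta>_def s det_mat2 by (simp_all flip: of_int_mult of_int_diff)
  have \<nu>: "\<nu> = of_int (int l * w) * \<sigma> - \<delta> * of_int z"
    by (simp add: \<nu>_def \<delta>_def)
  have "matrix_inv (of_int_mat s) = mat2 (d/\<delta>) (-b/\<delta>) (-c/\<delta>) (a/\<delta>)"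
    by (simp only: s of_int_mat_mat2 \<delta>(1)[symmetric] matrix_inv_mat2[OF \<delta>(2)[folded \<delta>(1)]]
        of_int_minus)
  then have Z: "cscale \<sigma> (matrix_inv (of_int_mat s)) =
      mat2 (\<sigma>*d/\<delta>) (-\<sigma>*b/\<delta>) (-\<sigma>*c/\<delta>) (\<sigma>*a/\<delta>)"
    by (simp add: cscale_mat2)
  have CZD: "of_int_mat (mat (int l * w)) ** mat2 (\<sigma>*d/\<delta>) (-\<sigma>*b/\<delta>) (-\<sigma>*c/\<delta>) (\<sigma>*a/\<delta>)
      + of_int_mat (mat (-z) ** adj2 s) = mat2 (\<nu>*d/\<delta>) (-\<nu>*b/\<delta>) (-\<nu>*c/\<delta>) (\<nu>*a/\<delta>)"
    using \<delta> by (simp add: \<nu> s adj2_def mat_eq_mat2 mat2_mult mat2_add of_int_mat_mat2 field_simps)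
  have AZB: "of_int_mat (mat y ** s) ** mat2 (\<sigma>*d/\<delta>) (-\<sigma>*b/\<delta>) (-\<sigma>*c/\<delta>) (\<sigma>*a/\<delta>)
      + of_int_mat (mat (-x)) = mat2 (of_int y * \<sigma> - of_int x) 0 0 (of_int y * \<sigma> - of_int x)"
    using \<delta> by (simp add: s mat_eq_mat2 mat2_mult mat2_add of_int_mat_mat2 field_simps)
      (simp add: algebra_simps flip: \<delta>(1))
  have det: "det (mat2 (\<nu>*d/\<delta>) (-\<nu>*b/\<delta>) (-\<nu>*c/\<delta>) (\<nu>*a/\<delta>)) = \<nu>^2 / \<delta>"
    using \<delta> by (simp add: det_mat2 field_simps power2_eq_square)
  have inv: "matrix_inv (mat2 (\<nu>*d/\<delta>) (-\<nu>*b/\<delta>) (-\<nu>*c/\<delta>) (\<nu>*a/\<delta>)) =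
      mat2 (a/\<nu>) (b/\<nu>) (c/\<nu>) (d/\<nu>)"
    using \<delta> assms(3) by (subst matrix_inv_mat2) (simp_all add: field_simps power2_eq_square)
  show ?thesis
    unfolding slash_def Gamma0_lift_def prod.case Z CZD AZB det inv
    by (simp add: s \<delta>_def of_int_mat_mat2 cscale_mat2 mat2_mult)
qed

lemma slash_E2: "slash k E2 F Z = inverse (det (- Z) ^ k) * F (matrix_inv (- Z))"
proof -
  have "of_int_mat (- mat 1) = - mat 1" "of_int_mat (mat 1) = mat 1" "of_int_mat 0 = 0"
    by (simp_all add: vec_eq_iff of_int_mat_def mat_def)
  moreover have "- mat 1 ** Z = - Z"
    by (simp add: vec_eq_iff matrix_matrix_mult_def mat_def if_distrib[of "\<lambda>c. c * _"] sum_negf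
        cong: if_cong)
  ultimately show ?thesis
    by (simp add: slash_def E2_def)
qed

lemma slash_E2_cscale:
  fixes S :: cmat2
  assumes "\<rho> \<noteq> 0" and "det S \<noteq> 0"
  shows "slash k E2 F (cscale \<rho> S) = inverse ((\<rho>^2 * det S)^k) * F (cscale (- 1/\<rho>) (matrix_inv S))"
proof -
  obtain a b c d where S: "S = mat2 a b c d"
    using mat2_expand by blast
  have "- cscale \<rho> S = mat2 (-\<rho>*a) (-\<rho>*b) (-\<rho>*c) (-\<rho>*d)"
    by (simp add: S cscale_mat2 mat2_uminus)
  moreover have "det (mat2 (-\<rho>*a) (-\<rho>*b) (-\<rho>*c) (-\<rho>*d)) = \<rho>^2 * det S"
    by (simp add: S det_mat2 power2_eq_square algebra_simps)
  moreover have "matrix_inv (mat2 (-\<rho>*a) (-\<rho>*b) (-\<rho>*c) (-\<rho>*d)) = cscale (- 1/\<rho>) (matrix_inv S)"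
    using assms by (simp add: S det_mat2 matrix_inv_mat2 cscale_mat2 field_simps power2_eq_square)
  ultimately show ?thesis
    using assms by (simp add: slash_E2)
qed

lemma phi_star_cscale: "phi_star s F \<tau> = F (cscale \<tau> (of_int_mat s))"
  by (simp add: phi_star_def cscale_def of_int_mat_def mult.commute)

lemma phi_star_scale: "phi_star (\<chi> i j. m * s$i$j) F \<tau> = phi_star s F (of_int m * \<tau>)"
  by (simp add: phi_star_def mult_ac)

lemma ell_slash_of_int:
  "ell_slash k (of_int a, of_int b, of_int c, of_int d) g \<tau> =
     of_int (a*d - b*c) ^ k * inverse ((of_int c * \<tau> + of_int d) ^ (2*k)) *
     g ((of_int a * \<tau> + of_int b) / (of_int c * \<tau> + of_int d))"
  by (simp add: ell_slash_def)

lemma upper_half_plane_denom_nonzero: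
  fixes c d :: real
  assumes "0 < Im \<tau>" and "c \<noteq> 0 \<or> d \<noteq> 0"
  shows "of_real c * \<tau> + of_real d \<noteq> 0"
proof
  assume "of_real c * \<tau> + of_real d = 0"
  then have "Im (of_real c * \<tau> + of_real d) = 0" and "Re (of_real c * \<tau> + of_real d) = 0"
    by simp_all
  then have "c * Im \<tau> = 0" and "c * Re \<tau> + d = 0"
    by simp_all
  then show False
    using assms by auto
qed

lemma phi_star_Gamma0_lift:
  fixes l :: nat and s :: imat2 and x y z w :: int and \<sigma> :: complex
  defines "\<nu> \<equiv> of_int (int l * w) * \<sigma> - of_int (det s * z)"
  assumes "modular_Gamma0_2 l k chi F"
    and s: "transpose s = s" "pos_def_int s"
    and unimodular: "int l * x * w - y * det s * z = 1"
    and \<sigma>: "0 < Im \<sigma>"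
  shows "phi_star s F ((of_int y * \<sigma> - of_int x) / \<nu>) =
    (\<nu>^2 / of_int (det s))^k * chi (det s * z^2) * F (cscale \<sigma> (matrix_inv (of_int_mat s)))"
proof -
  define Z where "Z = cscale \<sigma> (matrix_inv (of_int_mat s))"
  have "det s \<noteq> 0"
    using pos_def_int_det_pos[OF s] by simp
  have "\<nu> = of_real (of_int (int l * w)) * \<sigma> + of_real (of_int (- det s * z))"
    by (simp add: \<nu>_def)
  moreover have "int l * w \<noteq> 0 \<or> - det s * z \<noteq> 0"
    using unimodular by (cases "l = 0") auto
  ultimately have "\<nu> \<noteq> 0"
    using upper_half_plane_denom_nonzero[OF \<sigma>] by (metis of_int_eq_0_iff)
  have "slash k (Gamma0_lift l s x y z w) F Z = chi (det s * z^2) * F Z"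
    using assms(2) Gamma0_lift_in_Gamma0_2[OF s(1) unimodular] cscale_inverse_in_siegel_H2[OF s \<sigma>]
    unfolding Z_def modular_Gamma0_2_def by (auto simp: det_Gamma0_lift_D)
  moreover have "slash k (Gamma0_lift l s x y z w) F Z =
      inverse ((\<nu>^2 / of_int (det s))^k) * phi_star s F ((of_int y * \<sigma> - of_int x) / \<nu>)"
    unfolding Z_def \<nu>_def phi_star_cscale
    using slash_Gamma0_lift \<open>det s \<noteq> 0\<close> \<open>\<nu> \<noteq> 0\<close> \<nu>_def by blast
  ultimately show ?thesis
    using \<open>\<nu> \<noteq> 0\<close> \<open>det s \<noteq> 0\<close> unfolding Z_def by (simp add: field_simps)
qed

lemma phi_star_Atkin_Lehner:
  fixes l :: nat and s :: imat2 and x y z w :: int and \<tau> :: complex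
  defines "den \<equiv> of_int (int l * det s * z) * \<tau> + of_int (int l * w)"
  assumes "modular_Gamma0_2 l k chi F"
    and s: "transpose s = s" "pos_def_int s"
    and "0 < l" and unimodular: "int l * x * w - y * det s * z = 1"
    and \<tau>: "0 < Im \<tau>"
  shows "inverse (den ^ (2*k)) * phi_star s F ((of_int (int l * x) * \<tau> + of_int y) / den) =
    chi (det s * z^2) * inverse (((of_nat l * \<tau>)^2 * of_int (det s))^k) *
    F (cscale (- 1/(of_nat l * \<tau>)) (matrix_inv (of_int_mat s)))"
proof -
  define \<sigma> where "\<sigma> = - 1/(of_nat l * \<tau>)"
  define \<nu> where "\<nu> = of_int (int l * w) * \<sigma> - of_int (det s * z)"
  have "0 < det s"
    using s by (rule pos_def_int_det_pos)
  have "\<tau> \<noteq> 0"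
    using \<tau> by auto
  have "0 < Im \<sigma>"
    using \<tau> \<open>0 < l\<close> by (simp add: \<sigma>_def Im_complex_div_lt_0)
  have "den = of_real (of_int (int l * det s * z)) * \<tau> + of_real (of_int (int l * w))"
    by (simp add: den_def)
  moreover have "int l * det s * z \<noteq> 0 \<or> int l * w \<noteq> 0"
    using unimodular \<open>0 < l\<close> by auto
  ultimately have "den \<noteq> 0"
    using upper_half_plane_denom_nonzero[OF \<tau>] by (metis of_int_eq_0_iff)
  have \<nu>: "\<nu> = - den / (of_nat l * \<tau>)"
    using \<open>\<tau> \<noteq> 0\<close> \<open>0 < l\<close> by (simp add: \<nu>_def den_def \<sigma>_def field_simps)
  have moebius: "(of_int (int l * x) * \<tau> + of_int y) / den = (of_int y * \<sigma> - of_int x) / \<nu>"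
    using \<open>\<tau> \<noteq> 0\<close> \<open>0 < l\<close> \<open>den \<noteq> 0\<close> by (simp add: \<nu> \<sigma>_def field_simps)
  have "inverse (den^2) * (\<nu>^2 / of_int (det s)) = inverse ((of_nat l * \<tau>)^2 * of_int (det s))"
    using \<open>\<tau> \<noteq> 0\<close> \<open>0 < l\<close> \<open>den \<noteq> 0\<close> \<open>0 < det s\<close> by (simp add: \<nu> field_simps power2_eq_square)
  then have factor: "inverse (den ^ (2*k)) * (\<nu>^2 / of_int (det s))^k =
      inverse (((of_nat l * \<tau>)^2 * of_int (det s))^k)"
    by (metis power_mult power_mult_distrib power_inverse)
  show ?thesis
    unfolding moebius phi_star_Gamma0_lift[OF assms(2) s unimodular \<open>0 < Im \<sigma>\<close>, folded \<nu>_def]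
      factor[symmetric] \<sigma>_def[symmetric]
    by (simp only: mult_ac)
qed

theorem proposition4p3:
  fixes l k :: nat and chi :: "int \<Rightarrow> complex" and f :: "complex^2^2 \<Rightarrow> complex"
    and s :: "int^2^2" and x y z w :: int and \<tau> :: complex
  assumes "prime l"
    and "dirichlet_char l chi"
    and "siegel_cusp_form l k chi f"
    and "transpose s = s" and "pos_def_int s"
    and "\<not> int l dvd det s"
    and "(int l * x) * (int l * w) - y * (int l * det s * z) = int l"
    and "Im \<tau> > 0"
  shows "ell_slash k (of_int (int l * x), of_int y, of_int (int l * det s * z), of_int (int l * w))
            (phi_star s f) \<tau>
         = of_nat l ^ k * chi (det s * z^2) * phi_star (\<chi> i j. int l * s$i$j) (slash k E2 f) \<tau>"
proof -
  have "0 < l"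
    using assms(1) prime_gt_0_nat by blast
  have "int l * (int l * x * w - y * det s * z) = int l * 1"
    using assms(7) by (simp add: algebra_simps)
  then have unimodular: "int l * x * w - y * det s * z = 1"
    using \<open>0 < l\<close> by simp
  have "\<tau> \<noteq> 0" and "det (of_int_mat s) \<noteq> 0"
    using assms(8) pos_def_int_det_pos[OF assms(4,5)] by (auto simp: det_of_int_mat)
  let ?den = "of_int (int l * det s * z) * \<tau> + of_int (int l * w)"
  have "ell_slash k (of_int (int l * x), of_int y, of_int (int l * det s * z), of_int (int l * w))
      (phi_star s f) \<tau> =
      of_nat l ^ k * (inverse (?den ^ (2*k)) * phi_star s f ((of_int (int l * x) * \<tau> + of_int y) / ?den))"
    unfolding ell_slash_of_int assms(7) by (simp add: mult.assoc)
  also have "\<dots> = of_nat l ^ k * chi (det s * z^2) *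
      (inverse (((of_nat l * \<tau>)^2 * of_int (det s))^k) *
       f (cscale (- 1/(of_nat l * \<tau>)) (matrix_inv (of_int_mat s))))"
    unfolding phi_star_Atkin_Lehner[OF siegel_cusp_form_modular[OF assms(3)] assms(4,5) \<open>0 < l\<close>
        unimodular assms(8)]
    by (simp only: mult_ac)
  also have "\<dots> = of_nat l ^ k * chi (det s * z^2) * phi_star (\<chi> i j. int l * s$i$j) (slash k E2 f) \<tau>"
    unfolding phi_star_scale unfolding phi_star_cscale
    using \<open>0 < l\<close> \<open>\<tau> \<noteq> 0\<close> \<open>det (of_int_mat s) \<noteq> 0\<close> by (simp add: slash_E2_cscale det_of_int_mat)
  finally show ?thesis .
qed

end
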